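(* Let $G$ be a graph on $n\geq 3$ vertices and let $k$ be an integer with $2\leq k<n$. Suppose that every connected graph $H$ on $N$ vertices with $2\leq N\leq n$ satisfies the implication $\psi_{N-1}(H)=2\Rightarrow \psi_N(H)=1$. Then $\psi_k(G)=n-k+1$ implies $\psi_j(G)=n-j+1$ for all integers $j$ with $k<j\leq n$.
   Context: All graphs are finite, simple and nonempty. For a graph $G$ and a positive integer $k$, a $k$-path vertex cover ($k$-PVC) of $G$ is a set $S$ of vertices such that every path on $k$ vertices in $G$ contains at least one vertex of $S$ (if $G$ has no path on $k$ vertices, the empty set is a $k$-PVC). $\psi_k(G)$ denotes the minimum cardinality of a $k$-PVC of $G$. *)

theory Defs
  imports Main
begin

definition graph :: "'a set \<Rightarrow> ('a \<Rightarrow> 'a \<Rightarrow> bool) \<Rightarrow> bool" where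
  "graph V E \<longleftrightarrow> finite V \<and> V \<noteq> {} \<and>
     (\<forall>x y. E x y \<longrightarrow> x \<in> V \<and> y \<in> V) \<and>
     (\<forall>x y. E x y \<longrightarrow> E y x) \<and> (\<forall>x. \<not> E x x)"

definition connected_graph :: "'a set \<Rightarrow> ('a \<Rightarrow> 'a \<Rightarrow> bool) \<Rightarrow> bool" where
  "connected_graph V E \<longleftrightarrow> (\<forall>u\<in>V. \<forall>v\<in>V. E\<^sup>*\<^sup>* u v)"

definition is_path :: "'a set \<Rightarrow> ('a \<Rightarrow> 'a \<Rightarrow> bool) \<Rightarrow> nat \<Rightarrow> 'a list \<Rightarrow> bool" where
  "is_path V E k p \<longleftrightarrow> length p = k \<and> distinct p \<and> set p \<subseteq> V \<and>
     (\<forall>i. Suc i < length p \<longrightarrow> E (p ! i) (p ! Suc i))"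

definition is_kpvc :: "'a set \<Rightarrow> ('a \<Rightarrow> 'a \<Rightarrow> bool) \<Rightarrow> nat \<Rightarrow> 'a set \<Rightarrow> bool" where
  "is_kpvc V E k S \<longleftrightarrow> S \<subseteq> V \<and> (\<forall>p. is_path V E k p \<longrightarrow> set p \<inter> S \<noteq> {})"

definition psi :: "'a set \<Rightarrow> ('a \<Rightarrow> 'a \<Rightarrow> bool) \<Rightarrow> nat \<Rightarrow> nat" where
  "psi V E k = Min {card S | S. is_kpvc V E k S}"

end

theory Submission
  imports Defs
begin

text \<open>\<open>\<psi>\<^sub>k(G) = n - k + 1\<close> holds exactly when every \<open>k\<close>-subset of vertices is
  the vertex set of a path, because a \<open>k\<close>-subset spanning no path has the \<open>(n - k)\<close>-element
  complement as a \<open>k\<close>-PVC. Suppose every \<open>j\<close>-subset spans a path and let \<open>T\<close> have \<open>j + 1\<close>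
  vertices. In the subgraph induced on \<open>T\<close> every set of all but one vertex spans a path, so
  this subgraph is connected and has \<open>\<psi>\<^sub>j = 2\<close>; the hypothesis gives \<open>\<psi>\<^sub>j\<^sub>+\<^sub>1 = 1\<close>, i.e. \<open>T\<close>
  spans a path.\<close>

definition traceable :: "'a set \<Rightarrow> ('a \<Rightarrow> 'a \<Rightarrow> bool) \<Rightarrow> 'a set \<Rightarrow> bool" where
  "traceable V E T \<longleftrightarrow> (\<exists>p. is_path V E (card T) p \<and> set p = T)"

definition k_traceable :: "'a set \<Rightarrow> ('a \<Rightarrow> 'a \<Rightarrow> bool) \<Rightarrow> nat \<Rightarrow> bool" where
  "k_traceable V E k \<longleftrightarrow> (\<forall>T\<subseteq>V. card T = k \<longrightarrow> traceable V E T)"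

lemma card_set_path: "is_path V E k p \<Longrightarrow> card (set p) = k"
  unfolding is_path_def by (simp add: distinct_card)

lemma is_path_map:
  assumes "is_path V E m p" "inj_on f V" "f ` V \<subseteq> V'"
    and "\<And>x y. x \<in> V \<Longrightarrow> y \<in> V \<Longrightarrow> E x y \<Longrightarrow> E' (f x) (f y)"
  shows "is_path V' E' m (map f p)"
proof -
  have "set p \<subseteq> V" "\<And>i. Suc i < length p \<Longrightarrow> E (p ! i) (p ! Suc i)"
    using assms(1) unfolding is_path_def by auto
  then show ?thesis
    using assms unfolding is_path_def by (auto simp: distinct_map inj_on_subset subset_iff)
qed

lemma is_path_restrict: "is_path V E m p \<Longrightarrow> set p \<subseteq> T \<Longrightarrow> is_path T E m p"
  unfolding is_path_def by simp

lemma is_path_reaches_from_head: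
  assumes "is_path V E m p" "i < length p"
  shows "E\<^sup>*\<^sup>* (p ! 0) (p ! i)"
  using assms(2)
proof (induction i)
  case (Suc i)
  then have "E (p ! i) (p ! Suc i)" using assms(1) unfolding is_path_def by simp
  with Suc show ?case by (simp add: rtranclp.rtrancl_into_rtrancl)
qed simp

lemma finite_kpvc_cards:
  assumes "finite V"
  shows "finite {card S | S. is_kpvc V E k S}"
proof (rule finite_subset)
  show "{card S | S. is_kpvc V E k S} \<subseteq> {0..card V}"
    unfolding is_kpvc_def using assms card_mono by fastforce
qed simp

lemma psi_le_card: "finite V \<Longrightarrow> is_kpvc V E k S \<Longrightarrow> psi V E k \<le> card S"
  unfolding psi_def by (auto intro: Min_le finite_kpvc_cards)

lemma psi_ge:
  assumes "finite V" "1 \<le> k" "\<And>S. is_kpvc V E k S \<Longrightarrow> c \<le> card S"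
  shows "c \<le> psi V E k"
proof -
  have "is_kpvc V E k V"
    using assms(2) unfolding is_kpvc_def is_path_def by (auto simp: Int_absorb2)
  then show ?thesis
    unfolding psi_def using assms(3) finite_kpvc_cards[OF assms(1)] by (subst Min_ge_iff) auto
qed

lemma is_kpvc_if_card_large:
  assumes "finite V" "S \<subseteq> V" "card V - k < card S"
  shows "is_kpvc V E k S"
  unfolding is_kpvc_def
proof (intro conjI allI impI)
  fix p assume p: "is_path V E k p"
  show "set p \<inter> S \<noteq> {}"
  proof
    assume "set p \<inter> S = {}"
    then have "set p \<subseteq> V - S" using p unfolding is_path_def by auto
    then have "k \<le> card (V - S)"
      using card_mono[of "V - S" "set p"] assms(1) card_set_path[OF p] by simp
    moreover have "card (V - S) = card V - card S" "card S \<le> card V"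
      using assms(1,2) by (auto simp: card_Diff_subset finite_subset card_mono)
    ultimately show False using assms(3) by linarith
  qed
qed fact

lemma is_kpvc_compl_if_not_traceable:
  assumes "finite V" "T \<subseteq> V" "card T = k" "\<not> traceable V E T"
  shows "is_kpvc V E k (V - T)"
  unfolding is_kpvc_def
proof (intro conjI allI impI)
  fix p assume p: "is_path V E k p"
  show "set p \<inter> (V - T) \<noteq> {}"
  proof
    assume "set p \<inter> (V - T) = {}"
    then have "set p \<subseteq> T" using p unfolding is_path_def by auto
    then have "set p = T"
      using card_set_path[OF p] assms(1-3) by (metis card_subset_eq finite_subset)
    then show False using assms(3,4) p unfolding traceable_def by blast
  qed
qed auto

lemma psi_eq_iff_k_traceable:
  assumes "finite V" "1 \<le> k" "k \<le> card V"
  shows "psi V E k = card V - k + 1 \<longleftrightarrow> k_traceable V E k"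
proof
  assume psi: "psi V E k = card V - k + 1"
  show "k_traceable V E k"
    unfolding k_traceable_def
  proof (intro allI impI, rule ccontr)
    fix T assume T: "T \<subseteq> V" "card T = k" "\<not> traceable V E T"
    have "psi V E k \<le> card (V - T)"
      using psi_le_card is_kpvc_compl_if_not_traceable T assms(1) by blast
    moreover have "card (V - T) = card V - k"
      using T(1,2) assms(1) by (simp add: card_Diff_subset finite_subset)
    ultimately show False using psi by linarith
  qed
next
  assume trace: "k_traceable V E k"
  have "card V - k + 1 \<le> card V" using assms(2,3) by simp
  then obtain S where S: "S \<subseteq> V" "card S = card V - k + 1"
    using obtain_subset_with_card_n by metis
  have "is_kpvc V E k S" using is_kpvc_if_card_large[OF assms(1) S(1)] S(2) by simp
  then have "psi V E k \<le> card V - k + 1" using psi_le_card[OF assms(1)] S(2) by metis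
  moreover have "card V - k + 1 \<le> card S" if S': "is_kpvc V E k S" for S
  proof (rule ccontr)
    assume "\<not> ?thesis"
    moreover have "S \<subseteq> V" using S' unfolding is_kpvc_def by simp
    then have "card (V - S) = card V - card S" "card S \<le> card V"
      using assms(1) by (auto simp: card_Diff_subset finite_subset card_mono)
    ultimately have "k \<le> card (V - S)" using assms(3) by linarith
    then obtain T where T: "T \<subseteq> V - S" "card T = k"
      using obtain_subset_with_card_n by metis
    then obtain p where "is_path V E k p" "set p = T"
      using trace unfolding k_traceable_def traceable_def by auto
    with S' T show False unfolding is_kpvc_def by auto
  qed
  then have "card V - k + 1 \<le> psi V E k" using psi_ge assms(1,2) by blast
  ultimately show "psi V E k = card V - k + 1" by simp
qed

lemma connected_if_k_traceable_card_minus_one: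
  assumes g: "graph W F" and "3 \<le> card W" and trace: "k_traceable W F (card W - 1)"
  shows "connected_graph W F"
  unfolding connected_graph_def
proof (intro ballI)
  fix u v assume uv: "u \<in> W" "v \<in> W"
  have fin: "finite W" and sym: "symp F" using g unfolding graph_def by (auto intro: sympI)
  have "card {u, v} < card W" using \<open>3 \<le> card W\<close> by (cases "u = v") auto
  then have "\<not> W \<subseteq> {u, v}" by (meson card_mono finite.emptyI finite.insertI leD)
  then obtain w where w: "w \<in> W" "w \<notin> {u, v}" by blast
  have "card (W - {w}) = card W - 1" using w(1) fin by simp
  then obtain p where p: "is_path W F (card W - 1) p" "set p = W - {w}"
    using trace w(1) fin unfolding k_traceable_def traceable_def by (metis Diff_subset)
  have "u \<in> set p" "v \<in> set p" using p(2) uv w by auto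
  then obtain i i' where i: "i < length p" "p ! i = u" and i': "i' < length p" "p ! i' = v"
    unfolding in_set_conv_nth by blast
  have "F\<^sup>*\<^sup>* u (p ! 0)"
    using is_path_reaches_from_head[OF p(1) i(1)] i(2) sympD[OF symp_rtranclp[OF sym]] by simp
  also have "F\<^sup>*\<^sup>* (p ! 0) v" using is_path_reaches_from_head[OF p(1) i'(1)] i'(2) by simp
  finally show "F\<^sup>*\<^sup>* u v" .
qed

text \<open>The hypothesis of the theorem only speaks about graphs on \<^typ>\<open>nat\<close>.\<close>

lemma induced_subgraph_relabelled:
  fixes V :: "'a set" and T :: "'a set"
  assumes g: "graph V E" and T: "T \<subseteq> V" "T \<noteq> {}"
  obtains W :: "nat set" and F g where "graph W F" "bij_betw g W T"
    and "\<And>U. U \<subseteq> W \<Longrightarrow> traceable W F U \<longleftrightarrow> traceable V E (g ` U)"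
proof -
  have finT: "finite T" using g T finite_subset unfolding graph_def by blast
  define W where "W = {0..<card T}"
  obtain g where bij: "bij_betw g W T"
    using finite_same_card_bij[of W T] finT unfolding W_def by auto
  then have inj: "inj_on g W" and img: "g ` W = T" unfolding bij_betw_def by auto
  define F where "F x y \<longleftrightarrow> x \<in> W \<and> y \<in> W \<and> E (g x) (g y)" for x y
  define h where "h = inv_into W g"
  have h: "h y \<in> W" "g (h y) = y" if "y \<in> g ` W" for y
    unfolding h_def using that by (rule inv_into_into, rule f_inv_into_f)
  have inj_h: "inj_on h T" unfolding h_def using img by (simp add: inj_on_inv_into)
  have graph: "graph W F"
    using g finT T unfolding graph_def F_def W_def by (auto simp: card_gt_0_iff)
  have "traceable W F U \<longleftrightarrow> traceable V E (g ` U)" if U: "U \<subseteq> W" for U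
  proof
    assume "traceable W F U"
    then obtain p where p: "is_path W F (card U) p" "set p = U" unfolding traceable_def by blast
    moreover have "is_path V E (card U) (map g p)"
      using is_path_map[OF p(1) inj, of V E] img T by (auto simp: F_def)
    ultimately show "traceable V E (g ` U)"
      unfolding traceable_def using card_image[OF inj_on_subset[OF inj U]] by auto
  next
    assume "traceable V E (g ` U)"
    then obtain q where q: "is_path V E (card (g ` U)) q" "set q = g ` U"
      unfolding traceable_def by blast
    have "set q \<subseteq> T" using q(2) U img by auto
    then have "is_path T E (card U) q"
      using is_path_restrict q(1) card_image[OF inj_on_subset[OF inj U]] by metis
    then have "is_path W F (card U) (map h q)"
      by (rule is_path_map) (auto simp: F_def h inj_h img)
    moreover have "set (map h q) = U"
      using q(2) inv_into_image_cancel[OF inj U] by (simp add: h_def)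
    ultimately show "traceable W F U" unfolding traceable_def by blast
  qed
  with that graph bij show thesis by blast
qed

lemma k_traceable_Suc:
  assumes g: "graph V E" and "2 \<le> j" "j < card V"
    and hyp: "\<forall>(W :: nat set) (F :: nat \<Rightarrow> nat \<Rightarrow> bool) N.
                graph W F \<and> connected_graph W F \<and> card W = N \<and> 2 \<le> N \<and> N \<le> card V
                \<and> psi W F (N - 1) = 2 \<longrightarrow> psi W F N = 1"
    and trace: "k_traceable V E j"
  shows "k_traceable V E (Suc j)"
  unfolding k_traceable_def
proof (intro allI impI)
  fix T assume T: "T \<subseteq> V" "card T = Suc j"
  then have "T \<noteq> {}" by auto
  with induced_subgraph_relabelled[OF g T(1)] obtain W :: "nat set" and F g
    where gW: "graph W F" and bij: "bij_betw g W T"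
      and transfer: "\<And>U. U \<subseteq> W \<Longrightarrow> traceable W F U \<longleftrightarrow> traceable V E (g ` U)"
    by metis
  have inj: "inj_on g W" and img: "g ` W = T" using bij by (auto simp: bij_betw_def)
  have cW: "card W = Suc j" using bij T(2) by (simp add: bij_betw_same_card)
  have finW: "finite W" using gW unfolding graph_def by simp
  have trace_W: "k_traceable W F j"
    unfolding k_traceable_def
  proof (intro allI impI)
    fix U assume U: "U \<subseteq> W" "card U = j"
    have "g ` U \<subseteq> V" "card (g ` U) = j"
      using U img T(1) card_image[OF inj_on_subset[OF inj U(1)]] by auto
    then show "traceable W F U" using transfer[OF U(1)] trace unfolding k_traceable_def by blast
  qed
  have "psi W F j = 2"
    using psi_eq_iff_k_traceable[OF finW, of j F] trace_W cW assms(2) by (simp add: numeral_2_eq_2)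
  moreover have "connected_graph W F"
    using connected_if_k_traceable_card_minus_one[OF gW] trace_W cW assms(2) by simp
  ultimately have "psi W F (Suc j) = 1"
    using hyp[rule_format, of W F "Suc j"] gW cW assms(2,3) by simp
  then have "k_traceable W F (card W)"
    using psi_eq_iff_k_traceable[OF finW, of "card W"] cW by simp
  then have "traceable W F W" unfolding k_traceable_def by blast
  then show "traceable V E T" using transfer[of W] img by simp
qed

theorem mainTheorem10:
  fixes V :: "'a set" and E :: "'a \<Rightarrow> 'a \<Rightarrow> bool" and n k :: nat
  assumes "graph V E" and "card V = n" and "n \<ge> 3"
    and "2 \<le> k" and "k < n"
    and hyp: "\<forall>(W :: nat set) (F :: nat \<Rightarrow> nat \<Rightarrow> bool) N.
                graph W F \<and> connected_graph W F \<and> card W = N \<and> 2 \<le> N \<and> N \<le> n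
                \<and> psi W F (N - 1) = 2 \<longrightarrow> psi W F N = 1"
    and "psi V E k = n - k + 1"
  shows "\<forall>j. k < j \<and> j \<le> n \<longrightarrow> psi V E j = n - j + 1"
proof (intro allI impI)
  fix j assume j: "k < j \<and> j \<le> n"
  have fin: "finite V" using assms(1) unfolding graph_def by simp
  have "k_traceable V E (k + d)" if "k + d \<le> n" for d
    using that
  proof (induction d)
    case 0
    then show ?case using psi_eq_iff_k_traceable[OF fin] assms(2,4,5,7) by simp
  next
    case (Suc d)
    then show ?case using k_traceable_Suc[OF assms(1)] hyp assms(2,4) by simp
  qed
  from this[of "j - k"] show "psi V E j = n - j + 1"
    using psi_eq_iff_k_traceable[OF fin] j assms(2,4) by simp
qed

end
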